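(* Let $q$ be a prime power, $u,v$ non-zero in $\mathbb{F}_q$, and write $\mathrm{Rad}(q-1)=k\,p_1\cdots p_s$ with $k$ a divisor and $p_1,\ldots,p_s$ distinct primes. Let $N_{q-1}=N(q-1,q-1,q-1,q-1)$ and $N_{k,q-1}=N(k,k,k,q-1)$. Then $$N_{q-1}\geq \sum_{i=1}^s\{N(p_ik,k,k,q-1)+N(k,p_ik,k,q-1)+N(k,k,p_ik,q-1)\}-(3s-1)N_{k,q-1}.$$ Hence, with $\delta_3=1-3\sum_{i=1}^s 1/p_i$, $$N_{q-1}\geq \sum_{i=1}^s\{[N(p_ik,k,k,q-1)-\theta(p_i)N_{k,q-1}]+[N(k,p_ik,k,q-1)-\theta(p_i)N_{k,q-1}]+[N(k,k,p_ik,q-1)-\theta(p_i)N_{k,q-1}]\}+\delta_3N_{k,q-1}.$$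
   Context: $\mathrm{Rad}(m)$ is the product of the distinct primes dividing $m$; $\theta(m)=\phi(m)/m$. For a divisor $e$ of $q-1$, a non-zero $a\in\mathbb{F}_q$ is $e$-free if $a=b^d$ with $b\in\mathbb{F}_q$, $d\mid e$ implies $d=1$. For divisors $e_1,\ldots,e_4$ of $q-1$, $N(e_1,e_2,e_3,e_4)$ is the number of pairs of non-zero $a,b\in\mathbb{F}_q$ such that $a$, $b$, $ua+vb$, $va^{-1}+ub^{-1}$ are (non-zero and) respectively $e_1$-, $e_2$-, $e_3$-, $e_4$-free. *)

theory Defs
  imports "HOL-Number_Theory.Number_Theory"
begin

definition Rad :: "nat \<Rightarrow> nat" where
  "Rad m = (\<Prod>p\<in>prime_factors m. p)"

definition theta :: "nat \<Rightarrow> real" where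
  "theta m = real (totient m) / real m"

definition efree :: "nat \<Rightarrow> 'a::{finite,field} \<Rightarrow> bool" where
  "efree e a \<longleftrightarrow> a \<noteq> 0 \<and> (\<forall>(b::'a) (d::nat). d dvd e \<and> a = b ^ d \<longrightarrow> d = 1)"

definition Ncount :: "'a::{finite,field} \<Rightarrow> 'a \<Rightarrow> nat \<Rightarrow> nat \<Rightarrow> nat \<Rightarrow> nat \<Rightarrow> nat" where
  "Ncount u v e1 e2 e3 e4 = card {(a :: 'a, b :: 'a). a \<noteq> 0 \<and> b \<noteq> 0 \<and>
      efree e1 a \<and> efree e2 b \<and> efree e3 (u * a + v * b) \<and>
      efree e4 (v * inverse a + u * inverse b)}"

end

theory Submission
  imports Defs
begin

text \<open>
  Since \<open>Rad (q - 1) = k p\<^sub>1 \<cdots> p\<^sub>s\<close>, an element is \<open>(q - 1)\<close>-free exactly when it is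
  \<open>k\<close>-free and \<open>p\<^sub>i k\<close>-free for every \<open>i\<close>. Hence the pairs counted by
  \<open>N(q-1,q-1,q-1,q-1)\<close> are those of the set \<open>S\<close> counted by \<open>N(k,k,k,q-1)\<close> that lie in
  all \<open>3s\<close> subsets obtained by strengthening one of the first three conditions from \<open>k\<close>
  to \<open>p\<^sub>i k\<close>. Intersecting with a subset \<open>X \<subseteq> S\<close> removes at most \<open>|S| - |X|\<close> elements,
  which gives the first bound; the second is the same bound rewritten using
  \<open>\<theta>(p) = 1 - 1/p\<close>.
\<close>

lemma efree_dvd:
  assumes "d dvd e" "efree e a"
  shows "efree d a"
  using assms dvd_trans unfolding efree_def by blast

lemma efree_iff_not_prime_power:
  fixes a :: "'a::{finite,field}"
  assumes "e \<noteq> 0"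
  shows "efree e a \<longleftrightarrow> a \<noteq> 0 \<and> (\<forall>r b. prime r \<and> r dvd e \<longrightarrow> a \<noteq> b ^ r)"
proof
  assume "efree e a"
  then show "a \<noteq> 0 \<and> (\<forall>r b. prime r \<and> r dvd e \<longrightarrow> a \<noteq> b ^ r)"
    unfolding efree_def by (metis not_prime_1)
next
  assume h: "a \<noteq> 0 \<and> (\<forall>r b. prime r \<and> r dvd e \<longrightarrow> a \<noteq> b ^ r)"
  show "efree e a" unfolding efree_def
  proof (intro conjI allI impI)
    show "a \<noteq> 0" using h by simp
    fix b :: 'a and d :: nat
    assume hd: "d dvd e \<and> a = b ^ d"
    show "d = 1"
    proof (rule ccontr)
      assume "d \<noteq> 1"
      then obtain r where r: "prime r" "r dvd d" using prime_factor_nat by blast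
      then obtain c where "d = r * c" by (auto elim: dvdE)
      then have "a = (b ^ c) ^ r" using hd by (simp add: power_mult mult.commute)
      moreover have "r dvd e" using r hd dvd_trans by blast
      ultimately show False using h r by blast
    qed
  qed
qed

lemma efree_iff_efree_prime_multiples:
  fixes x :: "'a::{finite,field}"
  assumes "e \<noteq> 0" "k \<noteq> 0" "\<forall>i\<in>I. prime (p i)"
    and "\<And>r. prime r \<Longrightarrow> r dvd e \<longleftrightarrow> r dvd k \<or> (\<exists>i\<in>I. r = p i)"
  shows "efree e x \<longleftrightarrow> efree k x \<and> (\<forall>i\<in>I. efree (p i * k) x)"
proof -
  have "p i * k \<noteq> 0" if "i \<in> I" for i
    using assms(2,3) that by (auto simp: prime_gt_0_nat)
  moreover have "r dvd p i * k \<longleftrightarrow> r = p i \<or> r dvd k" if "i \<in> I" "prime r" for r i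
    using assms(3) that by (auto simp: prime_dvd_mult_iff dest: primes_dvd_imp_eq)
  ultimately show ?thesis
    using assms(1,2,4) by (simp add: efree_iff_not_prime_power) blast
qed

lemma Rad_nonzero: "Rad m \<noteq> 0"
  unfolding Rad_def by (auto simp: in_prime_factors_iff)

lemma prime_dvd_Rad_iff:
  assumes "m \<noteq> 0" "prime (r::nat)"
  shows "r dvd Rad m \<longleftrightarrow> r dvd m"
proof
  assume "r dvd Rad m"
  then obtain x where "x \<in> prime_factors m" "r dvd x"
    using assms unfolding Rad_def by (auto simp: prime_dvd_prod_iff)
  then show "r dvd m"
    using assms by (metis dvd_trans in_prime_factors_iff primes_dvd_imp_eq)
next
  assume "r dvd m"
  then have "r \<in> prime_factors m" using assms by (simp add: in_prime_factors_iff)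
  then show "r dvd Rad m" unfolding Rad_def using dvd_prodI[of "prime_factors m" r id] by simp
qed

lemma efree_split_Rad:
  fixes x :: "'a::{finite,field}"
  assumes "m \<noteq> 0" "finite I" "\<forall>i\<in>I. prime (p i)"
    and "Rad m = k * (\<Prod>i\<in>I. p i)"
  shows "efree m x \<longleftrightarrow> efree k x \<and> (\<forall>i\<in>I. efree (p i * k) x)"
proof (rule efree_iff_efree_prime_multiples[OF assms(1) _ assms(3)])
  show "k \<noteq> 0" using Rad_nonzero[of m] assms(4) by auto
  fix r :: nat
  assume r: "prime r"
  have "r dvd m \<longleftrightarrow> r dvd k * (\<Prod>i\<in>I. p i)"
    using prime_dvd_Rad_iff[OF assms(1) r] assms(4) by simp
  also have "\<dots> \<longleftrightarrow> r dvd k \<or> (\<exists>i\<in>I. r dvd p i)"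
    using r assms(2) by (simp add: prime_dvd_mult_iff prime_dvd_prod_iff)
  also have "\<dots> \<longleftrightarrow> r dvd k \<or> (\<exists>i\<in>I. r = p i)"
    using r assms(3) by (metis dvd_refl primes_dvd_imp_eq)
  finally show "r dvd m \<longleftrightarrow> r dvd k \<or> (\<exists>i\<in>I. r = p i)" .
qed

definition Npairs :: "'a::{finite,field} \<Rightarrow> 'a \<Rightarrow> nat \<Rightarrow> nat \<Rightarrow> nat \<Rightarrow> nat \<Rightarrow> ('a \<times> 'a) set" where
  "Npairs u v e1 e2 e3 e4 = {(a, b). a \<noteq> 0 \<and> b \<noteq> 0 \<and>
      efree e1 a \<and> efree e2 b \<and> efree e3 (u * a + v * b) \<and>
      efree e4 (v * inverse a + u * inverse b)}"

lemma Ncount_eq_card_Npairs: "Ncount u v e1 e2 e3 e4 = card (Npairs u v e1 e2 e3 e4)"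
  unfolding Ncount_def Npairs_def ..

lemma Npairs_eq_Inter:
  fixes u v :: "'a::{finite,field}"
  assumes split: "\<And>x::'a. efree e x \<longleftrightarrow> efree k x \<and> (\<forall>i\<in>I. efree (p i * k) x)"
  shows "Npairs u v e e e e' = Npairs u v k k k e' \<inter>
    (\<Inter>i\<in>I. Npairs u v (p i * k) k k e' \<inter> Npairs u v k (p i * k) k e' \<inter> Npairs u v k k (p i * k) e')"
proof -
  show ?thesis
    unfolding Npairs_def split using efree_dvd[OF dvd_triv_right] by blast
qed

lemma card_Int_lower_bound:
  assumes "finite S" "X \<subseteq> S" "Y \<subseteq> S"
  shows "card X + card Y \<le> card (X \<inter> Y) + card S"
proof -
  have "card X + card Y = card (X \<union> Y) + card (X \<inter> Y)"
    using assms by (intro card_Un_Int) (auto intro: finite_subset)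
  moreover have "card (X \<union> Y) \<le> card S"
    using assms by (intro card_mono) auto
  ultimately show ?thesis by linarith
qed

lemma card_Inter_triples_lower_bound:
  assumes "finite S" "finite I" "\<forall>i\<in>I. A i \<subseteq> S \<and> B i \<subseteq> S \<and> C i \<subseteq> S"
  shows "real (card (S \<inter> (\<Inter>i\<in>I. A i \<inter> B i \<inter> C i))) \<ge>
    (\<Sum>i\<in>I. real (card (A i)) + real (card (B i)) + real (card (C i))) - (3 * real (card I) - 1) * real (card S)"
  using assms(2,3)
proof (induction I rule: finite_induct)
  case empty
  then show ?case by simp
next
  case (insert x I)
  define T where "T = S \<inter> (\<Inter>i\<in>I. A i \<inter> B i \<inter> C i)"
  have subs: "T \<subseteq> S" "A x \<subseteq> S" "B x \<subseteq> S" "C x \<subseteq> S"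
    using insert.prems unfolding T_def by auto
  have "card T + card (A x) \<le> card (T \<inter> A x) + card S"
    "card (T \<inter> A x) + card (B x) \<le> card (T \<inter> A x \<inter> B x) + card S"
    "card (T \<inter> A x \<inter> B x) + card (C x) \<le> card (T \<inter> A x \<inter> B x \<inter> C x) + card S"
    using subs by (blast intro: card_Int_lower_bound[OF assms(1)])+
  moreover have "S \<inter> (\<Inter>i\<in>insert x I. A i \<inter> B i \<inter> C i) = T \<inter> A x \<inter> B x \<inter> C x"
    unfolding T_def by auto
  moreover have "real (card T) \<ge>
      (\<Sum>i\<in>I. real (card (A i)) + real (card (B i)) + real (card (C i))) - (3 * real (card I) - 1) * real (card S)"
    using insert unfolding T_def by simp
  ultimately show ?case
    using insert.hyps by (simp add: algebra_simps)
qed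

lemma theta_prime: "prime p \<Longrightarrow> theta p = 1 - 1 / real p"
  using prime_ge_1_nat[of p] by (simp add: theta_def totient_prime of_nat_diff field_simps)

lemma sum_excess_rearrange:
  fixes a b c g t :: "nat \<Rightarrow> real"
  assumes "finite I" "\<And>i. i \<in> I \<Longrightarrow> t i = 1 - g i"
  shows "(\<Sum>i\<in>I. (a i - t i * N) + (b i - t i * N) + (c i - t i * N))
      + (1 - 3 * (\<Sum>i\<in>I. g i)) * N
    = (\<Sum>i\<in>I. a i + b i + c i) - (3 * real (card I) - 1) * N"
proof -
  have "(\<Sum>i\<in>I. (a i - t i * N) + (b i - t i * N) + (c i - t i * N))
      = (\<Sum>i\<in>I. (a i + b i + c i) - 3 * N + 3 * g i * N)"
    by (intro sum.cong refl) (simp add: assms(2) algebra_simps)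
  also have "\<dots> = (\<Sum>i\<in>I. a i + b i + c i) - 3 * real (card I) * N + 3 * (\<Sum>i\<in>I. g i) * N"
    by (simp add: sum.distrib sum_subtractf sum_distrib_left sum_distrib_right)
  finally show ?thesis by (simp add: algebra_simps)
qed

theorem lemma5p2:
  fixes u v :: "'a::{finite,field}"
    and q k s :: nat and p :: "nat \<Rightarrow> nat"
  assumes "q = card (UNIV :: 'a set)"
    and "u \<noteq> 0" and "v \<noteq> 0"
    and "\<forall>i\<in>{1..s}. prime (p i)"
    and "inj_on p {1..s}"
    and "Rad (q - 1) = k * (\<Prod>i=1..s. p i)"
  shows "(real (Ncount u v (q-1) (q-1) (q-1) (q-1)) \<ge>
           (\<Sum>i=1..s. real (Ncount u v (p i * k) k k (q-1)) + real (Ncount u v k (p i * k) k (q-1))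
                      + real (Ncount u v k k (p i * k) (q-1)))
           - (3 * real s - 1) * real (Ncount u v k k k (q-1)))
       \<and> (real (Ncount u v (q-1) (q-1) (q-1) (q-1)) \<ge>
           (\<Sum>i=1..s.
              (real (Ncount u v (p i * k) k k (q-1)) - theta (p i) * real (Ncount u v k k k (q-1)))
            + (real (Ncount u v k (p i * k) k (q-1)) - theta (p i) * real (Ncount u v k k k (q-1)))
            + (real (Ncount u v k k (p i * k) (q-1)) - theta (p i) * real (Ncount u v k k k (q-1))))
           + (1 - 3 * (\<Sum>i=1..s. 1 / real (p i))) * real (Ncount u v k k k (q-1)))"
proof -
  have "card {0::'a, 1} \<le> q" unfolding assms(1) by (rule card_mono) auto
  then have "q - 1 \<noteq> 0" by simp
  then have split: "\<And>x::'a. efree (q - 1) x \<longleftrightarrow> efree k x \<and> (\<forall>i\<in>{1..s}. efree (p i * k) x)"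
    using efree_split_Rad assms(4,6) by blast
  have subsets: "\<forall>i\<in>{1..s}. Npairs u v (p i * k) k k (q - 1) \<subseteq> Npairs u v k k k (q - 1)
      \<and> Npairs u v k (p i * k) k (q - 1) \<subseteq> Npairs u v k k k (q - 1)
      \<and> Npairs u v k k (p i * k) (q - 1) \<subseteq> Npairs u v k k k (q - 1)"
    unfolding Npairs_def using efree_dvd[OF dvd_triv_right] by auto
  let ?N = "\<lambda>e1 e2 e3. real (Ncount u v e1 e2 e3 (q - 1))"
  let ?sum = "\<Sum>i=1..s. ?N (p i * k) k k + ?N k (p i * k) k + ?N k k (p i * k)"
  have bound: "?N (q - 1) (q - 1) (q - 1) \<ge> ?sum - (3 * real s - 1) * ?N k k k"
    using card_Inter_triples_lower_bound[OF _ _ subsets]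
    unfolding Ncount_eq_card_Npairs Npairs_eq_Inter[OF split] by simp
  have "(\<Sum>i=1..s. (?N (p i * k) k k - theta (p i) * ?N k k k)
        + (?N k (p i * k) k - theta (p i) * ?N k k k) + (?N k k (p i * k) - theta (p i) * ?N k k k))
      + (1 - 3 * (\<Sum>i=1..s. 1 / real (p i))) * ?N k k k = ?sum - (3 * real s - 1) * ?N k k k"
    using sum_excess_rearrange[where I = "{1..s}" and t = "\<lambda>i. theta (p i)"
        and g = "\<lambda>i. 1 / real (p i)" and N = "?N k k k" and a = "\<lambda>i. ?N (p i * k) k k"
        and b = "\<lambda>i. ?N k (p i * k) k" and c = "\<lambda>i. ?N k k (p i * k)"]
      assms(4) theta_prime by simp
  with bound show ?thesis by simp
qed

end
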